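(* Let $G$ be a locally compact group acting on a topological space $X$. Let $(g_\alpha)$ be a net in $G$ converging to infinity, and assume that for some $x,y\in X$ the net $(g_\alpha x)$ converges to $y$. Then there exist a directed set $(\beta)$ and two nets $n,n':(\beta)\to G$ such that $n(\beta)x\to y$ and $n'(\beta)x\to y$ in $X$, and $n(\beta)^{-1}n'(\beta)\to\infty$ in $G$.
   Context: A net $(g_\alpha)$ in a locally compact space converges to infinity if for every compact $K$ there is $\alpha_0$ with $g_\alpha\notin K$ for all $\alpha\ge\alpha_0$. *)

theory Defs
  imports "HOL-Analysis.Analysis" "HOL-Algebra.Group"
begin

definition directed_set :: "'i set \<Rightarrow> ('i \<Rightarrow> 'i \<Rightarrow> bool) \<Rightarrow> bool" where
  "directed_set D r \<longleftrightarrow> D \<noteq> {} \<and> (\<forall>a\<in>D. r a a)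
     \<and> (\<forall>a\<in>D. \<forall>b\<in>D. \<forall>c\<in>D. r a b \<longrightarrow> r b c \<longrightarrow> r a c)
     \<and> (\<forall>a\<in>D. \<forall>b\<in>D. \<exists>c\<in>D. r a c \<and> r b c)"

definition net_converges ::
    "'x topology \<Rightarrow> 'i set \<Rightarrow> ('i \<Rightarrow> 'i \<Rightarrow> bool) \<Rightarrow> ('i \<Rightarrow> 'x) \<Rightarrow> 'x \<Rightarrow> bool" where
  "net_converges X D r f y \<longleftrightarrow> y \<in> topspace X \<and>
     (\<forall>U. openin X U \<and> y \<in> U \<longrightarrow> (\<exists>a0\<in>D. \<forall>a\<in>D. r a0 a \<longrightarrow> f a \<in> U))"

definition net_to_infinity ::
    "'g topology \<Rightarrow> 'i set \<Rightarrow> ('i \<Rightarrow> 'i \<Rightarrow> bool) \<Rightarrow> ('i \<Rightarrow> 'g) \<Rightarrow> bool" where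
  "net_to_infinity T D r f \<longleftrightarrow>
     (\<forall>K. compactin T K \<longrightarrow> (\<exists>a0\<in>D. \<forall>a\<in>D. r a0 a \<longrightarrow> f a \<notin> K))"

definition topological_group :: "('g, 'b) monoid_scheme \<Rightarrow> 'g topology \<Rightarrow> bool" where
  "topological_group G T \<longleftrightarrow> group G \<and> topspace T = carrier G
     \<and> continuous_map (prod_topology T T) T (\<lambda>(a, b). a \<otimes>\<^bsub>G\<^esub> b)
     \<and> continuous_map T T (\<lambda>a. inv\<^bsub>G\<^esub> a)"

definition locally_compact_group :: "('g, 'b) monoid_scheme \<Rightarrow> 'g topology \<Rightarrow> bool" where
  "locally_compact_group G T \<longleftrightarrow> topological_group G T \<and> locally_compact_space T"

definition continuous_action ::
    "('g, 'b) monoid_scheme \<Rightarrow> 'g topology \<Rightarrow> 'x topology \<Rightarrow> ('g \<Rightarrow> 'x \<Rightarrow> 'x) \<Rightarrow> bool" where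
  "continuous_action G T X act \<longleftrightarrow>
     (\<forall>g\<in>carrier G. \<forall>x\<in>topspace X. act g x \<in> topspace X)
     \<and> (\<forall>x\<in>topspace X. act \<one>\<^bsub>G\<^esub> x = x)
     \<and> (\<forall>g\<in>carrier G. \<forall>h\<in>carrier G. \<forall>x\<in>topspace X.
           act (g \<otimes>\<^bsub>G\<^esub> h) x = act g (act h x))
     \<and> continuous_map (prod_topology T X) X (\<lambda>(g, x). act g x)"

end

theory Submission
  imports Defs
begin

(* Index the new nets by pairs (a, K), where a runs through the
   original directed set D and K through the compact subsets of G, ordered componentwise
   (K by inclusion).  Put n(a, K) = g a.  Since g a * g a' leaves the compact set
   g a * K as a' grows, we can pick a' beyond a with (g a)^-1 * g a' outside K and put
   n'(a, K) = g a'.  Both index maps (a, K) |-> a and (a, K) |-> a' are cofinal into D,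
   so n x and n' x converge to y along with g x, while n^-1 * n' eventually avoids every
   compact K by construction. *)

lemma compactin_left_translate:
  assumes "topological_group G T" and "h \<in> carrier G" and "compactin T K"
  shows "compactin T ((\<lambda>k. h \<otimes>\<^bsub>G\<^esub> k) ` K)"
proof -
  have top: "topspace T = carrier G"
    and mult: "continuous_map (prod_topology T T) T (\<lambda>(a, b). a \<otimes>\<^bsub>G\<^esub> b)"
    using assms(1) unfolding topological_group_def by auto
  have "continuous_map T (prod_topology T T) (\<lambda>k. (h, k))"
    using assms(2) top by (auto intro!: continuous_map_pairedI)
  from continuous_map_compose[OF this mult]
  have "continuous_map T T (\<lambda>k. h \<otimes>\<^bsub>G\<^esub> k)" by (simp add: o_def)
  then show ?thesis using image_compactin[OF assms(3)] by blast
qed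

lemma net_to_infinity_escape:
  assumes "topological_group G T" and "directed_set D r"
    and "\<forall>a\<in>D. g a \<in> carrier G" and "net_to_infinity T D r g"
    and "a \<in> D" and "compactin T K"
  shows "\<exists>a'\<in>D. r a a' \<and> inv\<^bsub>G\<^esub> (g a) \<otimes>\<^bsub>G\<^esub> g a' \<notin> K"
proof -
  interpret group G using assms(1) unfolding topological_group_def by blast
  have "g a \<in> carrier G" using assms(3,5) by blast
  from compactin_left_translate[OF assms(1) this assms(6)]
  obtain a0 where a0: "a0 \<in> D"
    and avoid: "\<forall>b\<in>D. r a0 b \<longrightarrow> g b \<notin> (\<lambda>k. g a \<otimes>\<^bsub>G\<^esub> k) ` K"
    using assms(4) unfolding net_to_infinity_def by blast
  obtain c where c: "c \<in> D" "r a c" "r a0 c"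
    using assms(2,5) a0 unfolding directed_set_def by blast
  have cancel: "g c = g a \<otimes>\<^bsub>G\<^esub> (inv\<^bsub>G\<^esub> (g a) \<otimes>\<^bsub>G\<^esub> g c)"
    using assms(3,5) c(1) by (simp add: m_assoc[symmetric])
  have "inv\<^bsub>G\<^esub> (g a) \<otimes>\<^bsub>G\<^esub> g c \<notin> K"
  proof
    assume "inv\<^bsub>G\<^esub> (g a) \<otimes>\<^bsub>G\<^esub> g c \<in> K"
    then have "g c \<in> (\<lambda>k. g a \<otimes>\<^bsub>G\<^esub> k) ` K" using cancel by (rule rev_image_eqI)
    with avoid c show False by blast
  qed
  with c show ?thesis by blast
qed

lemma directed_set_Times:
  assumes D: "directed_set D r" and D': "directed_set D' r'"
  shows "directed_set (D \<times> D') (\<lambda>(a, b) (c, d). r a c \<and> r' b d)"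
proof -
  have order: "(\<lambda>(a, b) (c, d). r a c \<and> r' b d) p q \<longleftrightarrow> r (fst p) (fst q) \<and> r' (snd p) (snd q)"
    for p q by (simp add: case_prod_beta)
  show ?thesis
    unfolding directed_set_def order
  proof (intro conjI ballI impI)
    show "D \<times> D' \<noteq> {}" using D D' unfolding directed_set_def by blast
  next
    fix p assume "p \<in> D \<times> D'"
    then show "r (fst p) (fst p)" and "r' (snd p) (snd p)"
      using D D' unfolding directed_set_def mem_Times_iff by blast+
  next
    fix p q s assume "p \<in> D \<times> D'" "q \<in> D \<times> D'" "s \<in> D \<times> D'"
      and "r (fst p) (fst q) \<and> r' (snd p) (snd q)" "r (fst q) (fst s) \<and> r' (snd q) (snd s)"
    then show "r (fst p) (fst s)" and "r' (snd p) (snd s)"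
      using D D' unfolding directed_set_def mem_Times_iff by blast+
  next
    fix p q assume "p \<in> D \<times> D'" "q \<in> D \<times> D'"
    then obtain c c' where "c \<in> D" "r (fst p) c" "r (fst q) c" "c' \<in> D'" "r' (snd p) c'" "r' (snd q) c'"
      using D D' unfolding directed_set_def mem_Times_iff by meson
    then show "\<exists>s\<in>D \<times> D'. (r (fst p) (fst s) \<and> r' (snd p) (snd s)) \<and> r (fst q) (fst s) \<and> r' (snd q) (snd s)"
      by (intro bexI[of _ "(c, c')"]) auto
  qed
qed

lemma directed_set_compactin: "directed_set {K. compactin T K} (\<subseteq>)"
  unfolding directed_set_def
proof (intro conjI ballI impI)
  show "{K. compactin T K} \<noteq> {}" using compactin_empty by blast
next
  fix K L assume "K \<in> {K. compactin T K}" "L \<in> {K. compactin T K}"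
  then have "K \<union> L \<in> {K. compactin T K}" by (simp add: compactin_Un)
  then show "\<exists>M\<in>{K. compactin T K}. K \<subseteq> M \<and> L \<subseteq> M" by blast
qed auto

text \<open>A map of index sets is cofinal if it eventually exceeds every given index;
  composing a net with a cofinal map gives a subnet.\<close>
definition cofinal_map ::
    "'j set \<Rightarrow> ('j \<Rightarrow> 'j \<Rightarrow> bool) \<Rightarrow> 'i set \<Rightarrow> ('i \<Rightarrow> 'i \<Rightarrow> bool) \<Rightarrow> ('j \<Rightarrow> 'i) \<Rightarrow> bool" where
  "cofinal_map E rE D r \<sigma> \<longleftrightarrow> (\<forall>e\<in>E. \<sigma> e \<in> D)
     \<and> (\<forall>a0\<in>D. \<exists>e0\<in>E. \<forall>e\<in>E. rE e0 e \<longrightarrow> r a0 (\<sigma> e))"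

lemma net_converges_cofinal:
  assumes "net_converges X D r f y" and "cofinal_map E rE D r \<sigma>"
  shows "net_converges X E rE (\<lambda>e. f (\<sigma> e)) y"
  unfolding net_converges_def
proof (intro conjI allI impI)
  show "y \<in> topspace X" using assms(1) unfolding net_converges_def by blast
  fix U assume "openin X U \<and> y \<in> U"
  then obtain a0 where "a0 \<in> D" and "\<forall>a\<in>D. r a0 a \<longrightarrow> f a \<in> U"
    using assms(1) unfolding net_converges_def by blast
  moreover obtain e0 where "e0 \<in> E" and "\<forall>e\<in>E. rE e0 e \<longrightarrow> r a0 (\<sigma> e)"
    using \<open>a0 \<in> D\<close> assms(2) unfolding cofinal_map_def by blast
  ultimately show "\<exists>e0\<in>E. \<forall>e\<in>E. rE e0 e \<longrightarrow> f (\<sigma> e) \<in> U"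
    using assms(2) unfolding cofinal_map_def by blast
qed

lemma cofinal_map_fst:
  assumes "C \<noteq> {}"
  shows "cofinal_map (D \<times> C) (\<lambda>(a, K) (b, L). r a b \<and> r' K L) D r fst"
  unfolding cofinal_map_def
proof (intro conjI ballI)
  show "fst e \<in> D" if "e \<in> D \<times> C" for e using that by auto
  fix a0 assume "a0 \<in> D"
  moreover obtain c where "c \<in> C" using assms by blast
  ultimately have "(a0, c) \<in> D \<times> C" by blast
  moreover have "\<forall>e. (\<lambda>(a, K) (b, L). r a b \<and> r' K L) (a0, c) e \<longrightarrow> r a0 (fst e)" by auto
  ultimately show "\<exists>e0\<in>D \<times> C. \<forall>e\<in>D \<times> C. (\<lambda>(a, K) (b, L). r a b \<and> r' K L) e0 e \<longrightarrow> r a0 (fst e)"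
    by blast
qed

lemma cofinal_map_above:
  assumes "directed_set D r" and "cofinal_map E rE D r \<sigma>"
    and "\<forall>e\<in>E. \<tau> e \<in> D \<and> r (\<sigma> e) (\<tau> e)"
  shows "cofinal_map E rE D r \<tau>"
  unfolding cofinal_map_def
proof (intro conjI ballI)
  show "\<tau> e \<in> D" if "e \<in> E" for e using assms(3) that by blast
  fix a0 assume "a0 \<in> D"
  then obtain e0 where "e0 \<in> E" and above: "\<forall>e\<in>E. rE e0 e \<longrightarrow> r a0 (\<sigma> e)"
    using assms(2) unfolding cofinal_map_def by blast
  have "r a0 (\<tau> e)" if "e \<in> E" and "rE e0 e" for e
  proof -
    have "\<sigma> e \<in> D" using assms(2) that(1) unfolding cofinal_map_def by blast
    then show ?thesis
      using assms(1,3) above that \<open>a0 \<in> D\<close> unfolding directed_set_def by blast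
  qed
  with \<open>e0 \<in> E\<close> show "\<exists>e0\<in>E. \<forall>e\<in>E. rE e0 e \<longrightarrow> r a0 (\<tau> e)" by blast
qed

theorem lemma2p2:
  fixes G :: "('g, 'b) monoid_scheme" and T :: "'g topology" and X :: "'x topology"
    and act :: "'g \<Rightarrow> 'x \<Rightarrow> 'x"
    and D :: "'i set" and r :: "'i \<Rightarrow> 'i \<Rightarrow> bool" and g :: "'i \<Rightarrow> 'g"
    and x y :: 'x
  assumes "locally_compact_group G T"
    and "continuous_action G T X act"
    and "directed_set D r"
    and "\<forall>a\<in>D. g a \<in> carrier G"
    and "net_to_infinity T D r g"
    and "x \<in> topspace X"
    and "net_converges X D r (\<lambda>a. act (g a) x) y"
  shows "\<exists>(E :: ('i \<times> 'g set) set) rE n n'.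
           directed_set E rE
           \<and> (\<forall>b\<in>E. n b \<in> carrier G \<and> n' b \<in> carrier G)
           \<and> net_converges X E rE (\<lambda>b. act (n b) x) y
           \<and> net_converges X E rE (\<lambda>b. act (n' b) x) y
           \<and> net_to_infinity T E rE (\<lambda>b. inv\<^bsub>G\<^esub> (n b) \<otimes>\<^bsub>G\<^esub> n' b)"
proof -
  have tg: "topological_group G T" using assms(1) unfolding locally_compact_group_def by blast
  define E where "E = D \<times> {K. compactin T K}"
  define rE where "rE = (\<lambda>(a::'i, K::'g set) (b, L). r a b \<and> K \<subseteq> L)"
  have dirE: "directed_set E rE"
    unfolding E_def rE_def by (rule directed_set_Times[OF assms(3) directed_set_compactin])
  have "\<forall>e\<in>E. \<exists>a'. a' \<in> D \<and> r (fst e) a' \<and> inv\<^bsub>G\<^esub> (g (fst e)) \<otimes>\<^bsub>G\<^esub> g a' \<notin> snd e"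
    using net_to_infinity_escape[OF tg assms(3-5)] unfolding E_def by auto
  then obtain sel where sel: "\<forall>e\<in>E. sel e \<in> D \<and> r (fst e) (sel e)
                               \<and> inv\<^bsub>G\<^esub> (g (fst e)) \<otimes>\<^bsub>G\<^esub> g (sel e) \<notin> snd e"
    by (metis bchoice)
  have cof_fst: "cofinal_map E rE D r fst"
    unfolding E_def rE_def by (rule cofinal_map_fst) (use compactin_empty in blast)
  have cof_sel: "cofinal_map E rE D r sel"
    using cofinal_map_above[OF assms(3) cof_fst] sel by blast
  have "net_to_infinity T E rE (\<lambda>e. inv\<^bsub>G\<^esub> (g (fst e)) \<otimes>\<^bsub>G\<^esub> g (sel e))"
    unfolding net_to_infinity_def
  proof (intro allI impI)
    fix K assume "compactin T K"
    moreover obtain d where "d \<in> D" using assms(3) unfolding directed_set_def by blast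
    ultimately have "(d, K) \<in> E" unfolding E_def by auto
    moreover have "\<forall>e\<in>E. rE (d, K) e \<longrightarrow> K \<subseteq> snd e" unfolding rE_def by auto
    ultimately show "\<exists>e0\<in>E. \<forall>e\<in>E. rE e0 e \<longrightarrow> inv\<^bsub>G\<^esub> (g (fst e)) \<otimes>\<^bsub>G\<^esub> g (sel e) \<notin> K"
      using sel by blast
  qed
  moreover have "\<forall>e\<in>E. g (fst e) \<in> carrier G \<and> g (sel e) \<in> carrier G"
    using assms(4) cof_fst cof_sel unfolding cofinal_map_def by blast
  ultimately show ?thesis
    using dirE net_converges_cofinal[OF assms(7) cof_fst] net_converges_cofinal[OF assms(7) cof_sel]
    by (intro exI[of _ E] exI[of _ rE] exI[of _ "\<lambda>e. g (fst e)"] exI[of _ "\<lambda>e. g (sel e)"]) simp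
qed

end
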